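(* For each $X\in\{\mathrm{B_{ii}},\mathrm{B_{vi}},\mathrm{H_{ii}},\mathrm{H_{iii}}\}$, let $G_X$ be the group with generators $a,b,c$ and relations $\mathrm{B_{ii}}$: $ababab=bababa,\ bc=ab,\ ac=ca$; $\mathrm{B_{vi}}$: $aba=bab,\ aca=bac,\ acaca=cacac$; $\mathrm{H_{ii}}$: $abab=baba,\ aca=bac,\ acaca=cacac$; $\mathrm{H_{iii}}$: $aba=bab,\ bcba=cbac,\ cba=acb$; and let $G_X^+$ be the submonoid of $G_X$ generated by $a,b,c$. Then $G_X^+$ is not a Gaussian monoid; hence it is neither an Artin monoid nor a Garside monoid.
   Context: A monoid is Gaussian if it is atomic, cancellative, and admits the (left and right) divisibility theory, i.e. any two elements have a left least common multiple and a right least common multiple with respect to left/right divisibility ($U|_lV$ iff $V=UW$, $U|_rV$ iff $V=WU$ for some $W$). *)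

theory Defs
  imports "HOL-Algebra.Group"
begin

datatype gen = a | b | c

text \<open>A group word: a letter (g, True) stands for g, (g, False) for g inverse.\<close>
type_synonym word = "(gen \<times> bool) list"

definition pos :: "gen list \<Rightarrow> word" where
  "pos w = map (\<lambda>g. (g, True)) w"

inductive grp_step :: "(gen list \<times> gen list) set \<Rightarrow> word \<Rightarrow> word \<Rightarrow> bool"
  for R where
  rel: "(l, r) \<in> R \<Longrightarrow> grp_step R (u @ pos l @ v) (u @ pos r @ v)"
| cancel: "grp_step R (u @ [(g, s), (g, \<not> s)] @ v) (u @ v)"

definition grp_eq :: "(gen list \<times> gen list) set \<Rightarrow> word \<Rightarrow> word \<Rightarrow> bool" where
  "grp_eq R = equivclp (grp_step R)"

definition cls :: "(gen list \<times> gen list) set \<Rightarrow> word \<Rightarrow> word set" where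
  "cls R w = {v. grp_eq R w v}"

text \<open>The submonoid of the presented group generated by a, b, c: the elements
  represented by positive words, with the group multiplication.\<close>
definition pos_monoid :: "(gen list \<times> gen list) set \<Rightarrow> word set monoid" where
  "pos_monoid R = \<lparr> carrier = (\<lambda>w. cls R (pos w)) ` UNIV,
                    mult = (\<lambda>X Y. \<Union>u\<in>X. \<Union>v\<in>Y. cls R (u @ v)),
                    one = cls R [] \<rparr>"

datatype presentation = B_ii | B_vi | H_ii | H_iii

fun rels :: "presentation \<Rightarrow> (gen list \<times> gen list) set" where
  "rels B_ii = {([a,b,a,b,a,b], [b,a,b,a,b,a]), ([b,c], [a,b]), ([a,c], [c,a])}"
| "rels B_vi = {([a,b,a], [b,a,b]), ([a,c,a], [b,a,c]), ([a,c,a,c,a], [c,a,c,a,c])}"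
| "rels H_ii = {([a,b,a,b], [b,a,b,a]), ([a,c,a], [b,a,c]), ([a,c,a,c,a], [c,a,c,a,c])}"
| "rels H_iii = {([a,b,a], [b,a,b]), ([b,c,b,a], [c,b,a,c]), ([c,b,a], [a,c,b])}"

definition left_dvd :: "('a, 'm) monoid_scheme \<Rightarrow> 'a \<Rightarrow> 'a \<Rightarrow> bool" where
  "left_dvd M u v \<longleftrightarrow> (\<exists>w\<in>carrier M. v = u \<otimes>\<^bsub>M\<^esub> w)"

definition right_dvd :: "('a, 'm) monoid_scheme \<Rightarrow> 'a \<Rightarrow> 'a \<Rightarrow> bool" where
  "right_dvd M u v \<longleftrightarrow> (\<exists>w\<in>carrier M. v = w \<otimes>\<^bsub>M\<^esub> u)"

definition cancellative :: "('a, 'm) monoid_scheme \<Rightarrow> bool" where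
  "cancellative M \<longleftrightarrow>
     (\<forall>x\<in>carrier M. \<forall>y\<in>carrier M. \<forall>z\<in>carrier M.
        (x \<otimes>\<^bsub>M\<^esub> y = x \<otimes>\<^bsub>M\<^esub> z \<longrightarrow> y = z) \<and>
        (y \<otimes>\<^bsub>M\<^esub> x = z \<otimes>\<^bsub>M\<^esub> x \<longrightarrow> y = z))"

definition atomic :: "('a, 'm) monoid_scheme \<Rightarrow> bool" where
  "atomic M \<longleftrightarrow>
     (\<forall>x\<in>carrier M. \<exists>N::nat. \<forall>xs. set xs \<subseteq> carrier M - {\<one>\<^bsub>M\<^esub>} \<and>
        foldr (mult M) xs \<one>\<^bsub>M\<^esub> = x \<longrightarrow> length xs \<le> N)"

definition is_lcm :: "('a, 'm) monoid_scheme \<Rightarrow> ('a \<Rightarrow> 'a \<Rightarrow> bool) \<Rightarrow> 'a \<Rightarrow> 'a \<Rightarrow> 'a \<Rightarrow> bool" where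
  "is_lcm M d x y z \<longleftrightarrow> z \<in> carrier M \<and> d x z \<and> d y z \<and>
     (\<forall>w\<in>carrier M. d x w \<and> d y w \<longrightarrow> d z w)"

definition gaussian :: "('a, 'm) monoid_scheme \<Rightarrow> bool" where
  "gaussian M \<longleftrightarrow> monoid M \<and> atomic M \<and> cancellative M \<and>
     (\<forall>x\<in>carrier M. \<forall>y\<in>carrier M.
        (\<exists>z. is_lcm M (left_dvd M) x y z) \<and> (\<exists>z. is_lcm M (right_dvd M) x y z))"

end

theory Submission
  imports Defs
begin

text \<open>All four presentations are homogeneous, so word length is a well-defined degree on
  \<open>G\<^sub>X\<^sup>+\<close>, and a divisor of an element of the same degree is that element. For two atoms
  \<open>x, y\<close> we exhibit common multiples \<open>p\<close> and \<open>q\<close> (on the left, or for \<open>H\<^sub>i\<^sub>i\<^sub>i\<close> on the right)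
  such that \<open>x\<close> and \<open>y\<close> have no common multiple of smaller degree than \<open>p\<close>, yet \<open>p\<close> does not
  divide \<open>q\<close>. A least common multiple would divide \<open>p\<close> without having smaller degree, hence
  equal \<open>p\<close>, and then divide \<open>q\<close>. The finitely many inequalities in \<open>G\<^sub>X\<close> this requires are
  certified by permutation representations of \<open>G\<^sub>X\<close>.\<close>

lemma grp_eq_refl [simp]: "grp_eq R u u"
  by (simp add: grp_eq_def)

lemma grp_eq_sym: "grp_eq R u v \<Longrightarrow> grp_eq R v u"
  unfolding grp_eq_def by (rule equivclp_sym)

lemma grp_eq_trans [trans]: "grp_eq R u v \<Longrightarrow> grp_eq R v w \<Longrightarrow> grp_eq R u w"
  unfolding grp_eq_def by (rule equivclp_trans)

lemma grp_step_context: "grp_step R u v \<Longrightarrow> grp_step R (p @ u @ q) (p @ v @ q)"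
proof (induction rule: grp_step.induct)
  case (rel l r u v)
  show ?case using grp_step.rel[OF rel, of "p @ u" "v @ q"] by simp
next
  case (cancel u g s v)
  show ?case using grp_step.cancel[of R "p @ u" g s "v @ q"] by simp
qed

lemma grp_eq_context: "grp_eq R u v \<Longrightarrow> grp_eq R (p @ u @ q) (p @ v @ q)"
  unfolding grp_eq_def
proof (induction rule: equivclp_induct)
  case (step y z)
  then show ?case by (metis equivclp_into_equivclp grp_step_context)
qed simp

lemma grp_eq_append: "grp_eq R u u' \<Longrightarrow> grp_eq R v v' \<Longrightarrow> grp_eq R (u @ v) (u' @ v')"
  using grp_eq_context[of R u u' "[]" v] grp_eq_context[of R v v' u' "[]"] grp_eq_trans by simp

definition inv_word :: "word \<Rightarrow> word" where
  "inv_word w = rev (map (\<lambda>(g, s). (g, \<not> s)) w)"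

lemma inv_word_inv_word [simp]: "inv_word (inv_word w) = w"
  by (induction w) (auto simp: inv_word_def)

lemma grp_eq_append_inv_word: "grp_eq R (w @ inv_word w) []"
proof (induction w)
  case Nil
  then show ?case by (simp add: inv_word_def)
next
  case (Cons x w)
  obtain g s where x: "x = (g, s)" by fastforce
  have "grp_eq R ([x] @ (w @ inv_word w) @ [(g, \<not> s)]) ([] @ [(g, s), (g, \<not> s)] @ [])"
    using grp_eq_context[OF Cons.IH, of "[x]" "[(g, \<not> s)]"] x by simp
  also have "grp_eq R \<dots> []"
    using grp_step.cancel[of R "[]" g s "[]"] by (simp add: grp_eq_def r_into_equivclp)
  finally show ?case by (simp add: inv_word_def x)
qed

lemma grp_eq_cancel_left:
  assumes "grp_eq R (p @ u) (p @ v)"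
  shows "grp_eq R u v"
proof -
  have cancel: "grp_eq R (inv_word p @ p @ w) w" for w
    using grp_eq_append[OF grp_eq_append_inv_word[of R "inv_word p"] grp_eq_refl[of R w]] by simp
  have "grp_eq R (inv_word p @ p @ u) (inv_word p @ p @ v)"
    using grp_eq_context[OF assms, of "inv_word p" "[]"] by simp
  then show ?thesis using cancel by (meson grp_eq_sym grp_eq_trans)
qed

lemma grp_eq_cancel_right:
  assumes "grp_eq R (u @ p) (v @ p)"
  shows "grp_eq R u v"
proof -
  have cancel: "grp_eq R (w @ p @ inv_word p) w" for w
    using grp_eq_append[OF grp_eq_refl[of R w] grp_eq_append_inv_word[of R p]] by simp
  have "grp_eq R (u @ p @ inv_word p) (v @ p @ inv_word p)"
    using grp_eq_context[OF assms, of "[]" "inv_word p"] by simp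
  then show ?thesis using cancel by (meson grp_eq_sym grp_eq_trans)
qed

lemma pos_Nil [simp]: "pos [] = []"
  and pos_Cons [simp]: "pos (g # w) = (g, True) # pos w"
  and pos_append [simp]: "pos (u @ w) = pos u @ pos w"
  by (simp_all add: pos_def)

lemma grp_eq_rel: "(l, r) \<in> R \<Longrightarrow> grp_eq R (pos (x @ l @ y)) (pos (x @ r @ y))"
  using grp_step.rel[of l r R "pos x" "pos y"] by (simp add: grp_eq_def r_into_equivclp)

text \<open>Positions range over a list rather than an interval so that \<open>code_simp\<close> can also
  refute \<open>replaces\<close>.\<close>

definition replaces :: "gen list \<Rightarrow> gen list \<Rightarrow> gen list \<Rightarrow> gen list \<Rightarrow> bool" where
  "replaces l r u v \<longleftrightarrow>
     (\<exists>k\<in>set [0..<Suc (length u)]. take (length l) (drop k u) = l \<and> v = take k u @ r @ drop (k + length l) u)"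

definition rel_step :: "(gen list \<times> gen list) set \<Rightarrow> gen list \<Rightarrow> gen list \<Rightarrow> bool" where
  "rel_step R u v \<longleftrightarrow> (\<exists>(l, r)\<in>R. replaces l r u v \<or> replaces r l u v)"

lemma grp_eq_if_replaces:
  assumes "(l, r) \<in> R \<or> (r, l) \<in> R" and "replaces l r u v"
  shows "grp_eq R (pos u) (pos v)"
proof -
  obtain k where l: "take (length l) (drop k u) = l" and v: "v = take k u @ r @ drop (k + length l) u"
    using assms(2) unfolding replaces_def by blast
  have "u = take k u @ l @ drop (k + length l) u"
    by (metis l append_take_drop_id drop_drop add.commute)
  with v show ?thesis
    using assms(1) grp_eq_rel grp_eq_sym by metis
qed

lemma grp_eq_if_rel_step:
  assumes "rel_step R u v"
  shows "grp_eq R (pos u) (pos v)"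
proof -
  obtain l r where "(l, r) \<in> R" and "replaces l r u v \<or> replaces r l u v"
    using assms by (auto simp: rel_step_def)
  then show ?thesis
    using grp_eq_if_replaces by blast
qed

lemma grp_eq_if_rel_steps: "successively (rel_step R) (u # ws) \<Longrightarrow> grp_eq R (pos u) (pos (last (u # ws)))"
  by (induction ws arbitrary: u) (auto intro: grp_eq_trans grp_eq_if_rel_step)

section \<open>Actions of the presented group\<close>

definition act :: "(gen \<Rightarrow> bool \<Rightarrow> 's \<Rightarrow> 's) \<Rightarrow> word \<Rightarrow> 's \<Rightarrow> 's" where
  "act f w = fold (\<lambda>(g, s). f g s) w"

definition valid_action :: "(gen list \<times> gen list) set \<Rightarrow> (gen \<Rightarrow> bool \<Rightarrow> 's \<Rightarrow> 's) \<Rightarrow> bool" where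
  "valid_action R f \<longleftrightarrow>
     (\<forall>g s x. f g (\<not> s) (f g s x) = x) \<and> (\<forall>(l, r)\<in>R. act f (pos l) = act f (pos r))"

lemma act_grp_eq:
  assumes "valid_action R f" and "grp_eq R u v"
  shows "act f u = act f v"
proof -
  have step: "act f u = act f v" if "grp_step R u v" for u v
    using that
  proof (induction rule: grp_step.induct)
    case (rel l r u v)
    then show ?case using assms(1) by (auto simp: valid_action_def act_def)
  next
    case (cancel u g s v)
    then show ?case using assms(1) by (auto simp: valid_action_def act_def fun_eq_iff)
  qed
  from assms(2) show ?thesis
    unfolding grp_eq_def by (induction rule: equivclp_induct) (auto dest: step)
qed

definition homogeneous :: "(gen list \<times> gen list) set \<Rightarrow> bool" where
  "homogeneous R \<longleftrightarrow> (\<forall>(l, r)\<in>R. length l = length r)"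

lemma length_eq_if_grp_eq:
  assumes "homogeneous R" and "grp_eq R (pos u) (pos v)"
  shows "length u = length v"
proof -
  define shift :: "gen \<Rightarrow> bool \<Rightarrow> int \<Rightarrow> int"
    where "shift g s n = (if s then n + 1 else n - 1)" for g s n
  have act_shift: "act shift (pos w) n = n + int (length w)" for w n
    by (induction w arbitrary: n) (auto simp: act_def shift_def)
  have "valid_action R shift"
    using assms(1) by (auto simp: valid_action_def homogeneous_def shift_def fun_eq_iff act_shift)
  from fun_cong[OF act_grp_eq[OF this assms(2)], of 0] show ?thesis
    by (simp add: act_shift)
qed

definition separates :: "(gen \<Rightarrow> bool \<Rightarrow> 's \<Rightarrow> 's) \<Rightarrow> 's list \<Rightarrow> gen list \<Rightarrow> gen list \<Rightarrow> bool" where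
  "separates f xs u v \<longleftrightarrow> map (act f (pos u)) xs \<noteq> map (act f (pos v)) xs"

lemma not_grp_eq_if_separates:
  "valid_action R f \<Longrightarrow> separates f xs u v \<Longrightarrow> \<not> grp_eq R (pos u) (pos v)"
  using act_grp_eq by (fastforce simp: separates_def)

definition table_apply :: "nat list \<Rightarrow> nat \<Rightarrow> nat" where
  "table_apply t i = (if i < length t then t ! i else i)"

definition table_unapply :: "nat list \<Rightarrow> nat \<Rightarrow> nat" where
  "table_unapply t i = (let j = length (takeWhile (\<lambda>x. x \<noteq> i) t) in if j < length t then j else i)"

definition table_action :: "(gen \<Rightarrow> nat list) \<Rightarrow> gen \<Rightarrow> bool \<Rightarrow> nat \<Rightarrow> nat" where
  "table_action T g s = (if s then table_apply (T g) else table_unapply (T g))"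

definition is_perm_table :: "nat \<Rightarrow> nat list \<Rightarrow> bool" where
  "is_perm_table n t \<longleftrightarrow> length t = n \<and>
     (\<forall>i\<in>{..<n}. t ! i < n \<and> table_unapply t (t ! i) = i \<and> table_unapply t i < n \<and> t ! table_unapply t i = i)"

lemma table_action_inverse:
  assumes "is_perm_table n t"
  shows "table_unapply t (table_apply t i) = i" and "table_apply t (table_unapply t i) = i"
proof -
  have "table_unapply t i = i" if "n \<le> i"
  proof -
    have "t ! j < n" if "j < length t" for j
      using assms that by (simp add: is_perm_table_def)
    then have "i \<notin> set t"
      using \<open>n \<le> i\<close> by (fastforce simp: in_set_conv_nth)
    then have "takeWhile (\<lambda>x. x \<noteq> i) t = t"
      by (auto simp: takeWhile_eq_all_conv)
    then show ?thesis by (simp add: table_unapply_def del: takeWhile_eq_all_conv)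
  qed
  with assms show "table_unapply t (table_apply t i) = i" "table_apply t (table_unapply t i) = i"
    by (cases "i < n"; auto simp: is_perm_table_def table_apply_def)+
qed

lemma valid_table_action:
  assumes tables: "\<forall>g\<in>{a, b, c}. is_perm_table n (T g)"
    and rels: "\<forall>(l, r)\<in>R. \<not> separates (table_action T) [0..<n] l r"
  shows "valid_action R (table_action T)"
proof -
  have perm: "is_perm_table n (T g)" for g
    using tables by (cases g) simp_all
  have fixed: "act (table_action T) w i = i" if "n \<le> i" for w i
    using that
  proof (induction w)
    case (Cons x w)
    have "table_action T g s i = i" for g s
      using perm[of g] table_action_inverse(1)[OF perm[of g], of i] Cons.prems
      by (auto simp: table_action_def table_apply_def is_perm_table_def)
    with Cons show ?case by (auto simp: act_def split: prod.split)
  qed (simp add: act_def)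
  have "act (table_action T) (pos l) = act (table_action T) (pos r)" if "(l, r) \<in> R" for l r
  proof
    fix i
    show "act (table_action T) (pos l) i = act (table_action T) (pos r) i"
      using rels that fixed by (cases "i < n") (auto simp: separates_def)
  qed
  moreover have "table_action T g (\<not> s) (table_action T g s i) = i" for g s i
    using table_action_inverse[OF perm[of g]] by (simp add: table_action_def)
  ultimately show ?thesis
    by (auto simp: valid_action_def)
qed

section \<open>Least common multiples in the positive monoid\<close>

lemma cls_eq_iff: "cls R u = cls R v \<longleftrightarrow> grp_eq R u v"
proof
  assume "cls R u = cls R v"
  then have "v \<in> cls R u" by (simp add: cls_def)
  then show "grp_eq R u v" by (simp add: cls_def)
next
  assume "grp_eq R u v"
  then show "cls R u = cls R v"
    unfolding cls_def using grp_eq_sym grp_eq_trans by blast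
qed

lemma mult_pos_monoid [simp]: "cls R u \<otimes>\<^bsub>pos_monoid R\<^esub> cls R v = cls R (u @ v)"
proof -
  have "cls R (u' @ v') = cls R (u @ v)" if "u' \<in> cls R u" "v' \<in> cls R v" for u' v'
  proof -
    have "grp_eq R (u @ v) (u' @ v')"
      using that by (simp add: cls_def grp_eq_append)
    then show ?thesis by (simp add: cls_eq_iff grp_eq_sym)
  qed
  then have "(\<Union>u'\<in>cls R u. \<Union>v'\<in>cls R v. cls R (u' @ v')) = (\<Union>u'\<in>cls R u. \<Union>v'\<in>cls R v. cls R (u @ v))"
    by (intro SUP_cong refl)
  also have "\<dots> = cls R (u @ v)"
  proof -
    have "cls R u \<noteq> {}" "cls R v \<noteq> {}"
      by (auto simp: cls_def intro: grp_eq_refl)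
    then show ?thesis by (simp add: UN_constant)
  qed
  finally show ?thesis
    by (simp add: pos_monoid_def)
qed

lemma carrier_pos_monoid: "X \<in> carrier (pos_monoid R) \<longleftrightarrow> (\<exists>w. X = cls R (pos w))"
  by (auto simp: pos_monoid_def)

lemma bex_carrier_pos_monoid: "(\<exists>X\<in>carrier (pos_monoid R). P X) \<longleftrightarrow> (\<exists>w. P (cls R (pos w)))"
  by (simp add: pos_monoid_def)

lemma left_dvd_cls_iff:
  "left_dvd (pos_monoid R) (cls R (pos u)) (cls R (pos w)) \<longleftrightarrow> (\<exists>v. grp_eq R (pos w) (pos (u @ v)))"
  by (simp add: left_dvd_def bex_carrier_pos_monoid cls_eq_iff)

lemma right_dvd_cls_iff:
  "right_dvd (pos_monoid R) (cls R (pos u)) (cls R (pos w)) \<longleftrightarrow> (\<exists>v. grp_eq R (pos w) (pos (v @ u)))"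
  by (simp add: right_dvd_def bex_carrier_pos_monoid cls_eq_iff)

lemma gaussian_pos_monoid_lcm:
  assumes "gaussian (pos_monoid R)"
  shows "\<exists>z. is_lcm (pos_monoid R) (left_dvd (pos_monoid R)) (cls R (pos u)) (cls R (pos w)) z"
    and "\<exists>z. is_lcm (pos_monoid R) (right_dvd (pos_monoid R)) (cls R (pos u)) (cls R (pos w)) z"
  using assms unfolding gaussian_def by (meson carrier_pos_monoid)+

definition degree :: "(gen list \<times> gen list) set \<Rightarrow> word set \<Rightarrow> nat" where
  "degree R X = length (SOME w. X = cls R (pos w))"

lemma degree_cls:
  assumes "homogeneous R"
  shows "degree R (cls R (pos w)) = length w"
proof -
  have "cls R (pos w) = cls R (pos (SOME v. cls R (pos w) = cls R (pos v)))"
    by (rule someI) (rule refl)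
  then show ?thesis
    using length_eq_if_grp_eq[OF assms] by (simp add: degree_def cls_eq_iff)
qed

lemma not_is_lcm_if_minimal_multiple_not_dvd:
  assumes rigid: "\<And>s t. s \<in> carrier M \<Longrightarrow> t \<in> carrier M \<Longrightarrow> d s t \<Longrightarrow> deg t \<le> deg s \<Longrightarrow> s = t"
    and p: "p \<in> carrier M" "d x p" "d y p"
    and minimal: "\<And>m. m \<in> carrier M \<Longrightarrow> d x m \<Longrightarrow> d y m \<Longrightarrow> deg p \<le> deg m"
    and q: "q \<in> carrier M" "d x q" "d y q" "\<not> d p q"
  shows "\<not> is_lcm M d x y z"
proof
  assume lcm: "is_lcm M d x y z"
  then have "z = p"
    using rigid minimal p unfolding is_lcm_def by blast
  with lcm q show False
    unfolding is_lcm_def by blast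
qed

definition words :: "nat \<Rightarrow> gen list list" where
  "words k = List.n_lists k [a, b, c]"

lemma mem_words_iff [simp]: "w \<in> set (words k) \<longleftrightarrow> length w = k"
proof -
  have "set [a, b, c] = UNIV"
    using gen.exhaust by auto
  then show ?thesis by (simp add: words_def set_n_lists)
qed

text \<open>\<open>ext u v\<close> is \<open>u\<close> extended by \<open>v\<close> on the side on which \<open>d\<close> multiplies: \<open>u @ v\<close> for
  left and \<open>v @ u\<close> for right divisibility.\<close>

lemma no_lcm_if_multiples_separated:
  fixes ext :: "gen list \<Rightarrow> gen list \<Rightarrow> gen list"
  assumes hom: "homogeneous R" and act: "valid_action R f"
    and dvd_iff: "\<And>u w. d (cls R (pos u)) (cls R (pos w)) \<longleftrightarrow> (\<exists>v. grp_eq R (pos w) (pos (ext u v)))"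
    and length_ext: "\<And>u v. length (ext u v) = length u + length v"
    and ext_Nil: "\<And>u. ext u [] = u"
    and p: "grp_eq R (pos p) (pos (ext [x] u))" "grp_eq R (pos p) (pos (ext [y] v))"
    and q: "grp_eq R (pos q) (pos (ext [x] u'))" "grp_eq R (pos q) (pos (ext [y] v'))"
    and short: "\<forall>k\<in>{..<length p - 1}. \<forall>u\<in>set (words k). \<forall>v\<in>set (words k).
                  separates f xs (ext [x] u) (ext [y] v)"
    and not_dvd: "\<forall>w\<in>set (words (length q - length p)). separates f xs (ext p w) q"
  shows "\<not> is_lcm (pos_monoid R) d (cls R (pos [x])) (cls R (pos [y])) z"
proof (rule not_is_lcm_if_minimal_multiple_not_dvd[where deg = "degree R"])
  let ?M = "pos_monoid R"
  show "s = t"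
    if "s \<in> carrier ?M" "t \<in> carrier ?M" and st: "d s t" and deg: "degree R t \<le> degree R s" for s t
  proof -
    obtain u w where s: "s = cls R (pos u)" and t: "t = cls R (pos w)"
      using \<open>s \<in> carrier ?M\<close> \<open>t \<in> carrier ?M\<close> by (auto simp: carrier_pos_monoid)
    with st obtain v where v: "grp_eq R (pos w) (pos (ext u v))"
      using dvd_iff by blast
    then have "v = []"
      using length_eq_if_grp_eq[OF hom v] deg by (simp add: s t degree_cls[OF hom] length_ext)
    with v show "s = t"
      by (simp add: s t ext_Nil cls_eq_iff grp_eq_sym)
  qed
  show "cls R (pos p) \<in> carrier ?M" "cls R (pos q) \<in> carrier ?M"
    by (auto simp: carrier_pos_monoid)
  show "d (cls R (pos [x])) (cls R (pos p))" "d (cls R (pos [y])) (cls R (pos p))"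
    "d (cls R (pos [x])) (cls R (pos q))" "d (cls R (pos [y])) (cls R (pos q))"
    using p q dvd_iff by blast+
  show "degree R (cls R (pos p)) \<le> degree R m"
    if "m \<in> carrier ?M" and xm: "d (cls R (pos [x])) m" and ym: "d (cls R (pos [y])) m" for m
  proof -
    obtain w where m: "m = cls R (pos w)"
      using \<open>m \<in> carrier ?M\<close> by (auto simp: carrier_pos_monoid)
    obtain u v where u: "grp_eq R (pos w) (pos (ext [x] u))" and v: "grp_eq R (pos w) (pos (ext [y] v))"
      using xm ym dvd_iff m by blast
    then have xy: "grp_eq R (pos (ext [x] u)) (pos (ext [y] v))"
      by (meson grp_eq_sym grp_eq_trans)
    have len: "length w = Suc (length u)" "length v = length u"
      using length_eq_if_grp_eq[OF hom u] length_eq_if_grp_eq[OF hom v] by (simp_all add: length_ext)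
    have "\<not> Suc (length u) < length p"
      using short not_grp_eq_if_separates[OF act] xy len by fastforce
    then show ?thesis
      by (simp add: m degree_cls[OF hom] len)
  qed
  show "\<not> d (cls R (pos p)) (cls R (pos q))"
  proof
    assume "d (cls R (pos p)) (cls R (pos q))"
    then obtain w where w: "grp_eq R (pos q) (pos (ext p w))"
      using dvd_iff by blast
    then have "length w = length q - length p"
      using length_eq_if_grp_eq[OF hom w] by (simp add: length_ext)
    then show False
      using not_dvd not_grp_eq_if_separates[OF act] grp_eq_sym[OF w] by fastforce
  qed
qed

lemma not_gaussian_if_left_multiples_separated:
  assumes "grp_eq R (pos p) (pos (x # u))" "grp_eq R (pos p) (pos (y # v))"
    and "grp_eq R (pos q) (pos (x # u'))" "grp_eq R (pos q) (pos (y # v'))"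
    and "homogeneous R" "valid_action R f"
    and "\<forall>k\<in>{..<length p - 1}. \<forall>u\<in>set (words k). \<forall>v\<in>set (words k). separates f xs (x # u) (y # v)"
    and "\<forall>w\<in>set (words (length q - length p)). separates f xs (p @ w) q"
  shows "\<not> gaussian (pos_monoid R)"
proof
  assume "gaussian (pos_monoid R)"
  then obtain z where "is_lcm (pos_monoid R) (left_dvd (pos_monoid R)) (cls R (pos [x])) (cls R (pos [y])) z"
    using gaussian_pos_monoid_lcm(1) by blast
  moreover have "\<not> is_lcm (pos_monoid R) (left_dvd (pos_monoid R)) (cls R (pos [x])) (cls R (pos [y])) z"
    by (rule no_lcm_if_multiples_separated[where ext = "(@)" and d = "left_dvd (pos_monoid R)",
          OF assms(5,6) left_dvd_cls_iff]) (use assms in simp_all)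
  ultimately show False by blast
qed

lemma not_gaussian_if_right_multiples_separated:
  assumes "grp_eq R (pos p) (pos (u @ [x]))" "grp_eq R (pos p) (pos (v @ [y]))"
    and "grp_eq R (pos q) (pos (u' @ [x]))" "grp_eq R (pos q) (pos (v' @ [y]))"
    and "homogeneous R" "valid_action R f"
    and "\<forall>k\<in>{..<length p - 1}. \<forall>u\<in>set (words k). \<forall>v\<in>set (words k). separates f xs (u @ [x]) (v @ [y])"
    and "\<forall>w\<in>set (words (length q - length p)). separates f xs (w @ p) q"
  shows "\<not> gaussian (pos_monoid R)"
proof
  assume "gaussian (pos_monoid R)"
  then obtain z where "is_lcm (pos_monoid R) (right_dvd (pos_monoid R)) (cls R (pos [x])) (cls R (pos [y])) z"
    using gaussian_pos_monoid_lcm(2) by blast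
  moreover have "\<not> is_lcm (pos_monoid R) (right_dvd (pos_monoid R)) (cls R (pos [x])) (cls R (pos [y])) z"
    by (rule no_lcm_if_multiples_separated[where ext = "\<lambda>u v. v @ u" and d = "right_dvd (pos_monoid R)",
          OF assms(5,6) right_dvd_cls_iff]) (use assms in simp_all)
  ultimately show False by blast
qed

definition table_B_vi :: "gen \<Rightarrow> nat list" where
  "table_B_vi g = (case g of a \<Rightarrow> [1, 2, 3, 4, 0] | b \<Rightarrow> [2, 0, 4, 1, 3] | c \<Rightarrow> [1, 4, 3, 0, 2])"

definition table_H_ii :: "gen \<Rightarrow> nat list" where
  "table_H_ii g = (case g of a \<Rightarrow> [0, 1, 3, 4, 2] | b \<Rightarrow> [0, 2, 3, 1, 4] | c \<Rightarrow> [1, 2, 0, 3, 4])"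

definition table_H_iii :: "gen \<Rightarrow> nat list" where
  "table_H_iii g = (case g of a \<Rightarrow> [1, 2, 3, 4, 0] | b \<Rightarrow> [2, 0, 4, 1, 3] | c \<Rightarrow> [3, 0, 4, 2, 1])"

definition table_B_ii :: "gen \<Rightarrow> nat list" where
  "table_B_ii g = (case g of
     a \<Rightarrow> [12, 7, 5, 15, 10, 2, 18, 1, 11, 21, 4, 8, 0, 19, 17, 3, 22, 14, 6, 13, 23, 9, 16, 20]
   | b \<Rightarrow> [13, 8, 3, 16, 11, 0, 19, 2, 9, 22, 5, 6, 1, 20, 15, 4, 23, 12, 7, 14, 21, 10, 17, 18]
   | c \<Rightarrow> [3, 13, 8, 0, 16, 11, 9, 19, 2, 6, 22, 5, 15, 1, 20, 12, 4, 23, 21, 7, 14, 18, 10, 17])"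

lemma valid_action_B_vi: "valid_action (rels B_vi) (table_action table_B_vi)"
  by (rule valid_table_action[where n = 5]) code_simp+

lemma valid_action_H_ii: "valid_action (rels H_ii) (table_action table_H_ii)"
  by (rule valid_table_action[where n = 5]) code_simp+

lemma valid_action_H_iii: "valid_action (rels H_iii) (table_action table_H_iii)"
  by (rule valid_table_action[where n = 5]) code_simp+

lemma valid_action_B_ii: "valid_action (rels B_ii) (table_action table_B_ii)"
  by (rule valid_table_action[where n = 24]) code_simp+

text \<open>Left multiples of \<open>a\<close> and \<open>b\<close>: \<open>p = aba = b\<cdot>ab\<close> and \<open>q = aca = b\<cdot>ac\<close>.\<close>

lemma not_gaussian_B_vi: "\<not> gaussian (pos_monoid (rels B_vi))"
proof -
  have "grp_eq (rels B_vi) (pos [a, b, a]) (pos [b, a, b])"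
    by (rule grp_eq_if_rel_step) code_simp
  moreover have "grp_eq (rels B_vi) (pos [a, c, a]) (pos [b, a, c])"
    by (rule grp_eq_if_rel_step) code_simp
  ultimately show ?thesis
    by (rule not_gaussian_if_left_multiples_separated[OF grp_eq_refl _ grp_eq_refl _ _ valid_action_B_vi,
          where xs = "[0..<5]"]) code_simp+
qed

text \<open>Left multiples of \<open>a\<close> and \<open>b\<close>: \<open>p = aca = b\<cdot>ac\<close> and \<open>q = abab = b\<cdot>aba\<close>.\<close>

lemma not_gaussian_H_ii: "\<not> gaussian (pos_monoid (rels H_ii))"
proof -
  have "grp_eq (rels H_ii) (pos [a, c, a]) (pos [b, a, c])"
    by (rule grp_eq_if_rel_step) code_simp
  moreover have "grp_eq (rels H_ii) (pos [a, b, a, b]) (pos [b, a, b, a])"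
    by (rule grp_eq_if_rel_step) code_simp
  ultimately show ?thesis
    by (rule not_gaussian_if_left_multiples_separated[OF grp_eq_refl _ grp_eq_refl _ _ valid_action_H_ii,
          where xs = "[0..<5]"]) code_simp+
qed

text \<open>Right multiples of \<open>a\<close> and \<open>b\<close>: \<open>p = ab\<cdot>a = ba\<cdot>b\<close> and \<open>q = cb\<cdot>a = ac\<cdot>b\<close>.\<close>

lemma not_gaussian_H_iii: "\<not> gaussian (pos_monoid (rels H_iii))"
proof -
  have "grp_eq (rels H_iii) (pos ([a, b] @ [a])) (pos ([b, a] @ [b]))"
    by (rule grp_eq_if_rel_step) code_simp
  moreover have "grp_eq (rels H_iii) (pos ([c, b] @ [a])) (pos ([a, c] @ [b]))"
    by (rule grp_eq_if_rel_step) code_simp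
  ultimately show ?thesis
    by (rule not_gaussian_if_right_multiples_separated[OF grp_eq_refl _ grp_eq_refl _ _ valid_action_H_iii,
          where xs = "[0..<5]"]) code_simp+
qed

text \<open>The rewriting chain only connects the padded words \<open>b\<cdot>bba\<cdot>acba\<close> and \<open>b\<cdot>cbb\<cdot>acba\<close>;
  the padding is cancelled in the group.\<close>

lemma B_ii_bba_eq_cbb: "grp_eq (rels B_ii) (pos [b, b, a]) (pos [c, b, b])"
proof -
  have "successively (rel_step (rels B_ii))
    [[b, b, b, a, a, c, b, a], [b, b, b, a, c, a, b, a], [b, b, b, a, c, b, c, a], [b, b, b, c, a, b, c, a],
     [b, b, a, b, a, b, c, a], [b, b, a, b, a, b, a, c], [b, a, b, a, b, a, b, c], [a, b, a, b, a, b, b, c],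
     [a, b, a, b, a, b, a, b], [a, b, b, a, b, a, b, a], [b, c, b, a, b, a, b, a], [b, c, b, b, c, a, b, a],
     [b, c, b, b, a, c, b, a]]"
    by code_simp
  from grp_eq_if_rel_steps[OF this]
  have "grp_eq (rels B_ii) (pos [b] @ pos [b, b, a] @ pos [a, c, b, a]) (pos [b] @ pos [c, b, b] @ pos [a, c, b, a])"
    by simp
  then show ?thesis
    by (rule grp_eq_cancel_right[OF grp_eq_cancel_left])
qed

text \<open>Left multiples of \<open>b\<close> and \<open>c\<close>: \<open>p = cbb = b\<cdot>ba\<close> and \<open>q = bcba = c\<cdot>abb\<close>.\<close>

lemma not_gaussian_B_ii: "\<not> gaussian (pos_monoid (rels B_ii))"
proof -
  have "grp_eq (rels B_ii) (pos [b, c, b, a]) (pos [a, b, b, a])"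
    by (rule grp_eq_if_rel_step) code_simp
  also have "grp_eq (rels B_ii) \<dots> (pos ([a] @ [c, b, b]))"
    using grp_eq_append[OF grp_eq_refl[of _ "pos [a]"] B_ii_bba_eq_cbb] by simp
  also have "grp_eq (rels B_ii) \<dots> (pos [c, a, b, b])"
    by (rule grp_eq_if_rel_step) code_simp
  finally have "grp_eq (rels B_ii) (pos [b, c, b, a]) (pos [c, a, b, b])" .
  with grp_eq_sym[OF B_ii_bba_eq_cbb] show ?thesis
    by (rule not_gaussian_if_left_multiples_separated[OF _ grp_eq_refl grp_eq_refl _ _ valid_action_B_ii,
          where xs = "[0..<24]"]) code_simp+
qed

theorem corollary5p1:
  shows "\<forall>X\<in>{B_ii, B_vi, H_ii, H_iii}. \<not> gaussian (pos_monoid (rels X))"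
  using not_gaussian_B_ii not_gaussian_B_vi not_gaussian_H_ii not_gaussian_H_iii by blast

end
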